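(* Assume $0<d<\tfrac12$. For integers $L\ge0$ define $A_L=\int_{L-1}^{L}e^{Z_H(s)}ds$ and $B_L=\int_{L-1}^{L}\int_{L-1}^{L}e^{Z_H(s)}e^{Z_H(t)}ds\,dt$. Then, as $L\to\infty$, $$\mathrm{cov}(A_L,A_0)\sim e\,\gamma_Z(L),\qquad \mathrm{cov}(A_0,B_L)\sim 2e^{3/2}\gamma_Z(L)\int_{-1}^0\int_{-1}^0 e^{\gamma_Z(s-u)}du\,ds,$$ $$\mathrm{cov}(B_0,B_L)\sim 4e^2\gamma_Z(L)\int_{-1}^0\int_{-1}^0\int_{-1}^0\int_{-1}^0 e^{\gamma_Z(s-t)}e^{\gamma_Z(u-v)}\,dv\,du\,dt\,ds.$$
   Context: $H=\tfrac12+d$, $c>0$, $B_H$ is a fractional Brownian motion with Hurst index $H$, and $Z_H(t)=B_H(ct)-B_H(ct-1)$, a stationary Gaussian process with mean $0$, variance $1$ and autocovariance $\gamma_Z(r)=\tfrac12\left[|cr+1|^{2H}-2|cr|^{2H}+|cr-1|^{2H}\right]$. *)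

theory Defs
  imports "HOL-Probability.Probability" "HOL-Library.Landau_Symbols"
begin

definition centered_gaussian_process ::
  "'a measure \<Rightarrow> (real \<Rightarrow> 'a \<Rightarrow> real) \<Rightarrow> (real \<Rightarrow> real \<Rightarrow> real) \<Rightarrow> bool" where
  "centered_gaussian_process M X K \<longleftrightarrow>
     prob_space M \<and> (\<forall>t. X t \<in> borel_measurable M) \<and>
     (\<forall>(T::real set) (a::real \<Rightarrow> real). finite T \<longrightarrow>
        (CLINT \<omega>|M. cis (\<Sum>t\<in>T. a t * X t \<omega>))
          = complex_of_real (exp (- (\<Sum>s\<in>T. \<Sum>t\<in>T. a s * a t * K s t) / 2)))"

definition fBm :: "'a measure \<Rightarrow> real \<Rightarrow> (real \<Rightarrow> 'a \<Rightarrow> real) \<Rightarrow> bool" where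
  "fBm M H B \<longleftrightarrow>
     centered_gaussian_process M B
       (\<lambda>s t. (\<bar>s\<bar> powr (2*H) + \<bar>t\<bar> powr (2*H) - \<bar>s - t\<bar> powr (2*H)) / 2) \<and>
     (\<lambda>(t, \<omega>). B t \<omega>) \<in> borel_measurable (lborel \<Otimes>\<^sub>M M)"

definition gammaZ :: "real \<Rightarrow> real \<Rightarrow> real \<Rightarrow> real" where
  "gammaZ H c r = (\<bar>c*r + 1\<bar> powr (2*H) - 2 * \<bar>c*r\<bar> powr (2*H) + \<bar>c*r - 1\<bar> powr (2*H)) / 2"

definition cov :: "'a measure \<Rightarrow> ('a \<Rightarrow> real) \<Rightarrow> ('a \<Rightarrow> real) \<Rightarrow> real" where
  "cov M X Y = (LINT \<omega>|M. X \<omega> * Y \<omega>) - (LINT \<omega>|M. X \<omega>) * (LINT \<omega>|M. Y \<omega>)"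

end

theory Submission
  imports Defs "HOL-Real_Asymp.Real_Asymp"
begin

text \<open>For a centred Gaussian process \<open>E exp (\<Sum>i. Z (s i)) = exp ((\<Sum>i j. \<gamma> (s i - s j)) / 2)\<close>.
  By Tonelli, every mixed moment of \<open>A L\<close> and \<open>BB L = (A L)\<^sup>2\<close> is therefore an integral over
  unit windows of such an exponential; in particular \<open>E (A L) = exp (1/2)\<close> and
  \<open>E ((A L)\<^sup>2) = e \<kappa>\<close>.  In a moment of two windows \<open>L\<close> apart, the \<open>k = 1, 2, 4\<close> cross terms
  \<open>\<gamma> (s - t)\<close> lie between \<open>d (1 + 2d) (c L \<plusminus> (c + 1)) powr (2d - 1)\<close> (a Taylor estimate of
  the second difference of \<open>\<bar>r\<bar> powr (2H)\<close>); these bounds also squeeze \<open>\<gamma> L\<close> and are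
  asymptotically equal.  So each covariance lies between \<open>C (exp (k \<cdot> bound) - 1)\<close> for the two
  bounds, hence is \<open>\<sim> k C \<gamma> L\<close>, with \<open>C = e, exp (3/2) \<kappa>, e\<^sup>2 \<kappa>\<^sup>2\<close>.\<close>

lemma nn_integral_exp_std_normal:
  "(\<integral>\<^sup>+x. ennreal (exp (s * x)) \<partial>std_normal_distribution) = ennreal (exp (s\<^sup>2 / 2))"
proof -
  have "std_normal_density x * exp (s * x) = exp (s\<^sup>2 / 2) * normal_density s 1 x" for x
  proof -
    have "- x\<^sup>2 / 2 + s * x = s\<^sup>2 / 2 + (- (x - s)\<^sup>2 / (2 * 1\<^sup>2))"
      by (simp add: power2_eq_square field_simps)
    then have "exp (- x\<^sup>2 / 2) * exp (s * x) = exp (s\<^sup>2 / 2) * exp (- (x - s)\<^sup>2 / (2 * 1\<^sup>2))"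
      by (simp flip: exp_add)
    then show ?thesis
      by (simp add: normal_density_def std_normal_density_def)
  qed
  then have "(\<integral>\<^sup>+x. ennreal (exp (s * x)) \<partial>std_normal_distribution)
      = (\<integral>\<^sup>+x. ennreal (exp (s\<^sup>2 / 2)) * ennreal (normal_density s 1 x) \<partial>lborel)"
    by (simp add: nn_integral_density flip: ennreal_mult)
  also have "\<dots> = ennreal (exp (s\<^sup>2 / 2)) * (\<integral>\<^sup>+x. ennreal (normal_density s 1 x) \<partial>lborel)"
    by (simp add: nn_integral_cmult)
  also have "(\<integral>\<^sup>+x. ennreal (normal_density s 1 x) \<partial>lborel) = 1"
    using prob_space.emeasure_space_1[OF prob_space_normal_density[where \<mu>=s and \<sigma>=1]]
    by (simp add: emeasure_density)
  finally show ?thesis by simp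
qed

lemma char_gaussian_linear_form:
  assumes gp: "centered_gaussian_process M X K" and fin: "finite T"
  shows "char (distr M borel (\<lambda>\<omega>. \<Sum>t\<in>T. a t * X t \<omega>)) \<theta>
           = complex_of_real (exp (- (\<theta>\<^sup>2 * (\<Sum>s\<in>T. \<Sum>t\<in>T. a s * a t * K s t)) / 2))"
proof -
  have [measurable]: "X t \<in> borel_measurable M" for t
    using gp unfolding centered_gaussian_process_def by simp
  have "char (distr M borel (\<lambda>\<omega>. \<Sum>t\<in>T. a t * X t \<omega>)) \<theta> = (CLINT \<omega>|M. cis (\<Sum>t\<in>T. (\<theta> * a t) * X t \<omega>))"
    by (simp add: char_def integral_distr cis_conv_exp sum_distrib_left mult_ac)
  also have "\<dots> = complex_of_real (exp (- (\<Sum>s\<in>T. \<Sum>t\<in>T. (\<theta> * a s) * (\<theta> * a t) * K s t) / 2))"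
    using gp fin unfolding centered_gaussian_process_def
    by (auto dest!: spec[where x=T] spec[where x="\<lambda>t. \<theta> * a t"])
  also have "(\<Sum>s\<in>T. \<Sum>t\<in>T. (\<theta> * a s) * (\<theta> * a t) * K s t) = \<theta>\<^sup>2 * (\<Sum>s\<in>T. \<Sum>t\<in>T. a s * a t * K s t)"
    by (simp add: sum_distrib_left power2_eq_square mult_ac)
  finally show ?thesis .
qed

lemma distr_gaussian_linear_form:
  fixes a :: "real \<Rightarrow> real"
  assumes gp: "centered_gaussian_process M X K" and fin: "finite T"
  defines "v \<equiv> \<Sum>s\<in>T. \<Sum>t\<in>T. a s * a t * K s t"
  shows "0 \<le> v"
    and "distr M borel (\<lambda>\<omega>. \<Sum>t\<in>T. a t * X t \<omega>) = distr std_normal_distribution borel (\<lambda>x. sqrt v * x)"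
proof -
  interpret prob_space M using gp unfolding centered_gaussian_process_def by simp
  have [measurable]: "X t \<in> borel_measurable M" for t
    using gp unfolding centered_gaussian_process_def by simp
  interpret std: real_distribution std_normal_distribution by (rule real_dist_normal_dist)
  have Y: "real_distribution (distr M borel (\<lambda>\<omega>. \<Sum>t\<in>T. a t * X t \<omega>))"
    by (rule real_distribution_distr) simp
  have N: "real_distribution (distr std_normal_distribution borel (\<lambda>x. sqrt v * x))"
    by (rule std.real_distribution_distr) simp
  have "norm (char (distr M borel (\<lambda>\<omega>. \<Sum>t\<in>T. a t * X t \<omega>)) 1) \<le> 1"
    by (rule real_distribution.cmod_char_le_1[OF Y])
  then show v: "0 \<le> v"
    using char_gaussian_linear_form[OF gp fin, of a 1] by (simp add: v_def)
  have "char (distr std_normal_distribution borel (\<lambda>x. sqrt v * x)) \<theta>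
      = char std_normal_distribution (\<theta> * sqrt v)" for \<theta>
    unfolding char_def by (simp add: integral_distr mult.assoc)
  then show "distr M borel (\<lambda>\<omega>. \<Sum>t\<in>T. a t * X t \<omega>) = distr std_normal_distribution borel (\<lambda>x. sqrt v * x)"
    using v by (intro Levy_uniqueness[OF Y N])
      (simp add: fun_eq_iff char_gaussian_linear_form[OF gp fin] char_std_normal_distribution
        power_mult_distrib v_def)
qed

lemma nn_integral_exp_gaussian_linear_form:
  assumes gp: "centered_gaussian_process M X K" and fin: "finite T"
  shows "(\<integral>\<^sup>+\<omega>. ennreal (exp (\<Sum>t\<in>T. a t * X t \<omega>)) \<partial>M)
           = ennreal (exp ((\<Sum>s\<in>T. \<Sum>t\<in>T. a s * a t * K s t) / 2))"
proof -
  have [measurable]: "X t \<in> borel_measurable M" for t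
    using gp unfolding centered_gaussian_process_def by simp
  have "(\<integral>\<^sup>+\<omega>. ennreal (exp (\<Sum>t\<in>T. a t * X t \<omega>)) \<partial>M)
      = (\<integral>\<^sup>+x. ennreal (exp x) \<partial>distr M borel (\<lambda>\<omega>. \<Sum>t\<in>T. a t * X t \<omega>))"
    by (simp add: nn_integral_distr)
  also have "\<dots> = (\<integral>\<^sup>+x. ennreal (exp (sqrt (\<Sum>s\<in>T. \<Sum>t\<in>T. a s * a t * K s t) * x)) \<partial>std_normal_distribution)"
    unfolding distr_gaussian_linear_form(2)[OF gp fin] by (simp add: nn_integral_distr)
  finally show ?thesis
    using distr_gaussian_linear_form(1)[OF gp fin, of a] by (simp add: nn_integral_exp_std_normal)
qed

lemma sum_merge_fibers:
  fixes b :: "'i \<Rightarrow> 'a::semiring_0"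
  assumes "finite I"
  shows "(\<Sum>i\<in>I. b i * f (\<tau> i)) = (\<Sum>t\<in>\<tau> ` I. (\<Sum>i\<in>{i\<in>I. \<tau> i = t}. b i) * f t)"
proof -
  have "(\<Sum>i\<in>I. b i * f (\<tau> i)) = (\<Sum>t\<in>\<tau> ` I. \<Sum>i\<in>{i\<in>I. \<tau> i = t}. b i * f (\<tau> i))"
    by (rule sum.image_gen[OF assms])
  also have "\<dots> = (\<Sum>t\<in>\<tau> ` I. (\<Sum>i\<in>{i\<in>I. \<tau> i = t}. b i) * f t)"
    unfolding sum_distrib_right by (intro sum.cong refl) auto
  finally show ?thesis .
qed

lemma nn_integral_exp_gaussian_indexed_sum:
  fixes b \<tau> :: "'i \<Rightarrow> real"
  assumes gp: "centered_gaussian_process M X K" and fin: "finite I"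
  shows "(\<integral>\<^sup>+\<omega>. ennreal (exp (\<Sum>i\<in>I. b i * X (\<tau> i) \<omega>)) \<partial>M)
           = ennreal (exp ((\<Sum>i\<in>I. \<Sum>j\<in>I. b i * b j * K (\<tau> i) (\<tau> j)) / 2))"
proof -
  \<comment> \<open>the definition only speaks of sums over distinct time points, so coinciding \<open>\<tau> i\<close> are merged\<close>
  define a where "a t = (\<Sum>i\<in>{i\<in>I. \<tau> i = t}. b i)" for t
  have "(\<Sum>i\<in>I. \<Sum>j\<in>I. b i * b j * K (\<tau> i) (\<tau> j)) = (\<Sum>i\<in>I. b i * (\<Sum>j\<in>I. b j * K (\<tau> i) (\<tau> j)))"
    by (simp add: sum_distrib_left mult.assoc)
  also have "\<dots> = (\<Sum>i\<in>I. b i * (\<Sum>t\<in>\<tau> ` I. a t * K (\<tau> i) t))"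
    unfolding a_def by (simp only: sum_merge_fibers[OF fin])
  also have "\<dots> = (\<Sum>s\<in>\<tau> ` I. a s * (\<Sum>t\<in>\<tau> ` I. a t * K s t))"
    unfolding a_def by (rule sum_merge_fibers[OF fin])
  also have "\<dots> = (\<Sum>s\<in>\<tau> ` I. \<Sum>t\<in>\<tau> ` I. a s * a t * K s t)"
    by (simp add: sum_distrib_left mult.assoc)
  finally have "(\<Sum>i\<in>I. \<Sum>j\<in>I. b i * b j * K (\<tau> i) (\<tau> j)) = \<dots>" .
  moreover have "(\<Sum>i\<in>I. b i * X (\<tau> i) \<omega>) = (\<Sum>t\<in>\<tau> ` I. a t * X t \<omega>)" for \<omega>
    unfolding a_def by (rule sum_merge_fibers[OF fin])
  ultimately show ?thesis
    using nn_integral_exp_gaussian_linear_form[OF gp, of "\<tau> ` I" a] fin by simp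
qed

lemma powr_second_difference_bounds:
  fixes p y :: real assumes p1: "1 < p" and p2: "p < 2" and y1: "y > 1"
  shows "p*(p-1)*(y+1) powr (p-2) \<le> (y+1) powr p - 2 * y powr p + (y-1) powr p \<and>
         (y+1) powr p - 2 * y powr p + (y-1) powr p \<le> p*(p-1)*(y-1) powr (p-2)"
proof -
  \<comment> \<open>Taylor's theorem at \<open>0\<close>, to second order, for \<open>t \<mapsto> (y + t) powr p + (y - t) powr p\<close>\<close>
  define D where "D m = (if m = 0 then (\<lambda>t. (y+t) powr p + (y-t) powr p)
     else if m = 1 then (\<lambda>t. p*(y+t) powr (p-1) - p*(y-t) powr (p-1))
     else (\<lambda>t. p*(p-1)*(y+t) powr (p-2) + p*(p-1)*(y-t) powr (p-2)))" for m :: nat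
  have der: "DERIV (D m) t :> D (Suc m) t" if m2: "m < 2" and t0: "0 \<le> t" and t1: "t \<le> 1" for m t
  proof -
    have pos: "y + t > 0" "y - t > 0" using t0 t1 y1 by auto
    consider "m = 0" | "m = 1" using m2 by linarith
    thus ?thesis
    proof cases
      case 1
      show ?thesis unfolding 1 D_def using pos
        by (auto intro!: derivative_eq_intros)
    next
      case 2
      have "p - 1 - 1 = p - 2" by simp
      show ?thesis unfolding 2 D_def using pos
        by (auto intro!: derivative_eq_intros simp: algebra_simps)
    qed
  qed
  obtain t where t: "0 < t" "t < 1"
    and eq: "D 0 1 = (\<Sum>m<2. D m 0 / fact m * 1 ^ m) + D 2 t / fact 2 * 1 ^ 2"
    using Maclaurin[of 1 2 D "D 0"] der by auto
  define S where "S = (y+t) powr (p-2) + (y-t) powr (p-2)"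
  define K where "K = p*(p-1)/2"
  have D: "(y+1) powr p - 2 * y powr p + (y-1) powr p = K * S"
    using eq by (simp add: D_def S_def K_def numeral_2_eq_2 field_simps)
  have "(y+1) powr (p-2) \<le> (y+t) powr (p-2)" "(y+t) powr (p-2) \<le> (y-1) powr (p-2)"
    "(y+1) powr (p-2) \<le> (y-t) powr (p-2)" "(y-t) powr (p-2) \<le> (y-1) powr (p-2)"
    using t y1 p2 by (auto intro!: powr_mono2')
  hence S: "2 * (y+1) powr (p-2) \<le> S" "S \<le> 2 * (y-1) powr (p-2)" unfolding S_def by linarith+
  have K0: "K \<ge> 0" using p1 by (simp add: K_def)
  have "K * (2 * (y+1) powr (p-2)) \<le> K * S" by (rule mult_left_mono[OF S(1) K0])
  moreover have "K * S \<le> K * (2 * (y-1) powr (p-2))" by (rule mult_left_mono[OF S(2) K0])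
  ultimately show ?thesis unfolding D by (simp add: K_def)
qed


lemma gammaZ_bounds:
  fixes H c r :: real
  assumes "1/2 < H" "H < 1" and cr: "c * r > 1"
  shows "H * (2*H - 1) * (c*r + 1) powr (2*H - 2) \<le> gammaZ H c r \<and>
         gammaZ H c r \<le> H * (2*H - 1) * (c*r - 1) powr (2*H - 2)"
proof -
  have "2*H * (2*H - 1) * (c*r + 1) powr (2*H - 2)
          \<le> (c*r + 1) powr (2*H) - 2 * (c*r) powr (2*H) + (c*r - 1) powr (2*H) \<and>
        (c*r + 1) powr (2*H) - 2 * (c*r) powr (2*H) + (c*r - 1) powr (2*H)
          \<le> 2*H * (2*H - 1) * (c*r - 1) powr (2*H - 2)"
    by (rule powr_second_difference_bounds) (use assms in auto)
  moreover have "\<bar>c*r + 1\<bar> = c*r + 1" "\<bar>c*r\<bar> = c*r" "\<bar>c*r - 1\<bar> = c*r - 1" using cr by auto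
  ultimately show ?thesis unfolding gammaZ_def by (simp add: field_simps)
qed

lemma gammaZ_commute: "gammaZ H c (a - b) = gammaZ H c (b - a)"
proof -
  have "\<bar>c*(a - b) + 1\<bar> = \<bar>c*(b - a) - 1\<bar>" "\<bar>c*(a - b) - 1\<bar> = \<bar>c*(b - a) + 1\<bar>" "\<bar>c*(a - b)\<bar> = \<bar>c*(b - a)\<bar>"
    by (simp_all add: abs_if algebra_simps)
  then show ?thesis unfolding gammaZ_def by simp
qed

lemma abs_gammaZ_le:
  fixes H c r :: real
  assumes "0 \<le> H" "0 < c" "\<bar>r\<bar> \<le> 1"
  shows "\<bar>gammaZ H c r\<bar> \<le> (c + 1) powr (2*H)"
proof -
  have "\<bar>c*r\<bar> \<le> c" using assms by (simp add: abs_mult mult_left_le)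
  then have "\<bar>c*r + 1\<bar> \<le> c + 1" "\<bar>c*r\<bar> \<le> c + 1" "\<bar>c*r - 1\<bar> \<le> c + 1" by auto
  then have "\<bar>c*r + 1\<bar> powr (2*H) \<le> (c + 1) powr (2*H)" "\<bar>c*r\<bar> powr (2*H) \<le> (c + 1) powr (2*H)"
    "\<bar>c*r - 1\<bar> powr (2*H) \<le> (c + 1) powr (2*H)"
    using assms by (auto intro!: powr_mono2)
  moreover have "0 \<le> \<bar>c*r + 1\<bar> powr (2*H)" "0 \<le> \<bar>c*r\<bar> powr (2*H)" "0 \<le> \<bar>c*r - 1\<bar> powr (2*H)"
    by simp_all
  moreover have "\<bar>(a - 2*b + e) / 2\<bar> \<le> P"
    if "a \<le> P" "b \<le> P" "e \<le> P" "0 \<le> a" "0 \<le> b" "0 \<le> e" for a b e P :: real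
    using that by (simp add: abs_le_iff)
  ultimately show ?thesis unfolding gammaZ_def by blast
qed

lemma asymp_equiv_exp_sandwich:
  fixes lo hi g R :: "nat \<Rightarrow> real" and k C :: real
  assumes k: "k > 0" and C: "C > 0"
    and ratio: "(\<lambda>n. lo n / hi n) \<longlonglongrightarrow> 1" and hi: "hi \<longlonglongrightarrow> 0"
    and bounds: "eventually (\<lambda>n. 0 < lo n \<and> lo n \<le> g n \<and> g n \<le> hi n \<and>
                   C * (exp (k * lo n) - 1) \<le> R n \<and> R n \<le> C * (exp (k * hi n) - 1)) sequentially"
  shows "R \<sim>[sequentially] (\<lambda>n. k * C * g n)"
proof (rule asymp_equivI')
  have "(\<lambda>n. inverse (lo n / hi n) * exp (k * hi n)) \<longlonglongrightarrow> inverse 1 * exp (k * 0)"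
    by (intro tendsto_intros ratio hi) simp
  then have upper: "(\<lambda>n. hi n * exp (k * hi n) / lo n) \<longlonglongrightarrow> 1"
    by (simp add: inverse_divide)
  show "(\<lambda>n. R n / (k * C * g n)) \<longlonglongrightarrow> 1"
  proof (rule tendsto_sandwich[OF _ _ ratio upper])
    show "eventually (\<lambda>n. lo n / hi n \<le> R n / (k * C * g n)) sequentially"
      using bounds
    proof eventually_elim
      case (elim n)
      then have g: "g n > 0" by linarith
      have "lo n / hi n \<le> lo n / g n"
        using elim g by (intro divide_left_mono) auto
      also have "\<dots> = C * (k * lo n) / (k * C * g n)" using k C by simp
      also have "\<dots> \<le> C * (exp (k * lo n) - 1) / (k * C * g n)"
        using exp_ge_add_one_self[of "k * lo n"] k C g
        by (intro divide_right_mono mult_left_mono) (auto simp: algebra_simps)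
      also have "\<dots> \<le> R n / (k * C * g n)"
        using elim k C g by (intro divide_right_mono) auto
      finally show ?case .
    qed
    show "eventually (\<lambda>n. R n / (k * C * g n) \<le> hi n * exp (k * hi n) / lo n) sequentially"
      using bounds
    proof eventually_elim
      case (elim n)
      then have g: "g n > 0" by linarith
      define y where "y = k * hi n"
      have "(1 - y) * exp y \<le> exp (-y) * exp y"
        using exp_ge_add_one_self[of "-y"] by (intro mult_right_mono) auto
      then have exp_y: "exp y - 1 \<le> y * exp y" by (simp add: exp_minus field_simps)
      have "R n / (k * C * g n) \<le> C * (exp y - 1) / (k * C * g n)"
        using elim k C g by (intro divide_right_mono) (auto simp: y_def)
      also have "\<dots> \<le> C * (y * exp y) / (k * C * g n)"
        using exp_y k C g by (intro divide_right_mono mult_left_mono) auto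
      also have "\<dots> = hi n * exp y / g n" using k C by (simp add: y_def)
      also have "\<dots> \<le> hi n * exp y / lo n"
        using elim g by (intro divide_left_mono) auto
      finally show ?case by (simp add: y_def)
    qed
  qed
qed

lemma nn_integral_mult_nn_integral_swap:
  assumes "sigma_finite_measure N" "sigma_finite_measure M"
    and f[measurable]: "(\<lambda>(s, \<omega>). f s \<omega>) \<in> borel_measurable (N \<Otimes>\<^sub>M M)"
    and W[measurable]: "W \<in> borel_measurable M"
  shows "(\<integral>\<^sup>+\<omega>. W \<omega> * (\<integral>\<^sup>+s. f s \<omega> \<partial>N) \<partial>M) = (\<integral>\<^sup>+s. \<integral>\<^sup>+\<omega>. W \<omega> * f s \<omega> \<partial>M \<partial>N)"
proof -
  interpret pair_sigma_finite N M using assms(1,2) by (simp add: pair_sigma_finite_def)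
  have "W \<omega> * (\<integral>\<^sup>+s. f s \<omega> \<partial>N) = (\<integral>\<^sup>+s. W \<omega> * f s \<omega> \<partial>N)" if "\<omega> \<in> space M" for \<omega>
    using that by (intro nn_integral_cmult[symmetric]) measurable
  then have "(\<integral>\<^sup>+\<omega>. W \<omega> * (\<integral>\<^sup>+s. f s \<omega> \<partial>N) \<partial>M) = (\<integral>\<^sup>+\<omega>. \<integral>\<^sup>+s. W \<omega> * f s \<omega> \<partial>N \<partial>M)"
    by (intro nn_integral_cong) simp
  also have "\<dots> = (\<integral>\<^sup>+s. \<integral>\<^sup>+\<omega>. W \<omega> * f s \<omega> \<partial>M \<partial>N)"
    by (intro Fubini') measurable
  finally show ?thesis .
qed

lemma integral_enn2real_eq:
  assumes [measurable]: "F \<in> borel_measurable M" and fin: "(\<integral>\<^sup>+\<omega>. F \<omega> \<partial>M) < \<top>"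
  shows "(LINT \<omega>|M. enn2real (F \<omega>)) = enn2real (\<integral>\<^sup>+\<omega>. F \<omega> \<partial>M)"
proof -
  have "(LINT \<omega>|M. enn2real (F \<omega>)) = enn2real (\<integral>\<^sup>+\<omega>. ennreal (enn2real (F \<omega>)) \<partial>M)"
    by (rule integral_eq_nn_integral) auto
  also have "(\<integral>\<^sup>+\<omega>. ennreal (enn2real (F \<omega>)) \<partial>M) = (\<integral>\<^sup>+\<omega>. F \<omega> \<partial>M)"
  proof (rule nn_integral_cong_AE)
    have "AE \<omega> in M. F \<omega> \<noteq> \<infinity>" by (rule nn_integral_PInf_AE) (use fin in auto)
    then show "AE \<omega> in M. ennreal (enn2real (F \<omega>)) = F \<omega>" by eventually_elim (simp add: less_top)
  qed
  finally show ?thesis .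
qed

lemma cov_bounds_nn_integral:
  assumes [measurable]: "F \<in> borel_measurable M" "G \<in> borel_measurable M"
    and X: "\<And>\<omega>. \<omega> \<in> space M \<Longrightarrow> X \<omega> = enn2real (F \<omega>)"
    and Y: "\<And>\<omega>. \<omega> \<in> space M \<Longrightarrow> Y \<omega> = enn2real (G \<omega>)"
    and EF: "(\<integral>\<^sup>+\<omega>. F \<omega> \<partial>M) = ennreal a" and EG: "(\<integral>\<^sup>+\<omega>. G \<omega> \<partial>M) = ennreal b"
    and lower: "ennreal l \<le> (\<integral>\<^sup>+\<omega>. F \<omega> * G \<omega> \<partial>M)" and upper: "(\<integral>\<^sup>+\<omega>. F \<omega> * G \<omega> \<partial>M) \<le> ennreal u"
    and "0 \<le> a" "0 \<le> b" "0 \<le> l" "0 \<le> u"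
  shows "l - a * b \<le> cov M X Y \<and> cov M X Y \<le> u - a * b"
proof -
  have fin: "(\<integral>\<^sup>+\<omega>. F \<omega> * G \<omega> \<partial>M) < \<top>" using upper by (simp add: order_le_less_trans)
  have "(LINT \<omega>|M. X \<omega>) = (LINT \<omega>|M. enn2real (F \<omega>))" by (intro Bochner_Integration.integral_cong) (simp_all add: X)
  also have "\<dots> = a" using \<open>0 \<le> a\<close> by (subst integral_enn2real_eq) (simp_all add: EF)
  finally have EX: "(LINT \<omega>|M. X \<omega>) = a" .
  have "(LINT \<omega>|M. Y \<omega>) = (LINT \<omega>|M. enn2real (G \<omega>))" by (intro Bochner_Integration.integral_cong) (simp_all add: Y)
  also have "\<dots> = b" using \<open>0 \<le> b\<close> by (subst integral_enn2real_eq) (simp_all add: EG)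
  finally have EY: "(LINT \<omega>|M. Y \<omega>) = b" .
  have "(LINT \<omega>|M. X \<omega> * Y \<omega>) = (LINT \<omega>|M. enn2real (F \<omega> * G \<omega>))"
    by (intro Bochner_Integration.integral_cong) (simp_all add: X Y enn2real_mult)
  also have "\<dots> = enn2real (\<integral>\<^sup>+\<omega>. F \<omega> * G \<omega> \<partial>M)" using fin by (intro integral_enn2real_eq) simp_all
  finally have EXY: "(LINT \<omega>|M. X \<omega> * Y \<omega>) = enn2real (\<integral>\<^sup>+\<omega>. F \<omega> * G \<omega> \<partial>M)" .
  have "l \<le> enn2real (\<integral>\<^sup>+\<omega>. F \<omega> * G \<omega> \<partial>M)"
    using enn2real_mono[OF lower fin] \<open>0 \<le> l\<close> by simp
  moreover have "enn2real (\<integral>\<^sup>+\<omega>. F \<omega> * G \<omega> \<partial>M) \<le> u"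
    using enn2real_mono[OF upper] \<open>0 \<le> u\<close> by simp
  ultimately show ?thesis unfolding cov_def EX EY EXY by simp
qed

fun nested_lborel :: "nat \<Rightarrow> (real list \<Rightarrow> ennreal) \<Rightarrow> ennreal" where
  "nested_lborel 0 F = F []"
| "nested_lborel (Suc n) F = (\<integral>\<^sup>+s. nested_lborel n (\<lambda>ss. F (s # ss)) \<partial>lborel)"

locale fbm_increments =
  fixes M :: "'a measure" and B :: "real \<Rightarrow> 'a \<Rightarrow> real" and d c :: real
  assumes d_pos: "0 < d" and d_less: "d < 1/2" and c_pos: "0 < c"
    and fbm: "fBm M (1/2 + d) B"
begin

definition Z :: "real \<Rightarrow> 'a \<Rightarrow> real" where "Z t \<omega> = B (c*t) \<omega> - B (c*t - 1) \<omega>"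

definition \<gamma> :: "real \<Rightarrow> real" where "\<gamma> = gammaZ (1/2 + d) c"

definition kernel :: "real \<Rightarrow> real \<Rightarrow> real" where
  "kernel s t = (\<bar>s\<bar> powr (2*(1/2+d)) + \<bar>t\<bar> powr (2*(1/2+d)) - \<bar>s - t\<bar> powr (2*(1/2+d))) / 2"

lemma gaussian: "centered_gaussian_process M B kernel"
  using fbm unfolding fBm_def kernel_def[abs_def] by simp

sublocale prob_space M
  using gaussian unfolding centered_gaussian_process_def by simp

lemma measurable_B: "(\<lambda>(t, \<omega>). B t \<omega>) \<in> borel_measurable (lborel \<Otimes>\<^sub>M M)"
  using fbm unfolding fBm_def by simp

lemma measurable_Z[measurable]:
  assumes [measurable]: "f \<in> borel_measurable N" "h \<in> measurable N M"
  shows "(\<lambda>x. Z (f x) (h x)) \<in> borel_measurable N"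
proof -
  have B: "(\<lambda>x. B (e x) (h x)) \<in> borel_measurable N" if [measurable]: "e \<in> borel_measurable N" for e
  proof -
    have "(\<lambda>x. (e x, h x)) \<in> measurable N (lborel \<Otimes>\<^sub>M M)" by measurable
    from measurable_compose[OF this measurable_B] show ?thesis by simp
  qed
  show ?thesis unfolding Z_def by (intro borel_measurable_diff B) measurable
qed

lemma measurable_\<gamma>[measurable]: "\<gamma> \<in> borel_measurable borel"
  unfolding \<gamma>_def gammaZ_def[abs_def] by measurable

lemma kernel_increments:
  "kernel (c * u) (c * v) - kernel (c * u) (c * v - 1) - kernel (c * u - 1) (c * v) + kernel (c * u - 1) (c * v - 1)
     = \<gamma> (u - v)"
proof -
  have e: "c * u - (c * v - 1) = c*(u - v) + 1" "c * u - 1 - c * v = c*(u - v) - 1"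
    "c * u - 1 - (c * v - 1) = c*(u - v)" "c * u - c * v = c*(u - v)"
    by (simp_all add: algebra_simps)
  show ?thesis unfolding kernel_def \<gamma>_def gammaZ_def e by (simp add: field_simps)
qed

lemma \<gamma>_0: "\<gamma> 0 = 1"
  unfolding \<gamma>_def gammaZ_def by simp

lemma \<gamma>_commute: "\<gamma> (a - b) = \<gamma> (b - a)"
  unfolding \<gamma>_def by (rule gammaZ_commute)

lemma nn_integral_exp_sum_Z:
  fixes s :: "'i \<Rightarrow> real"
  assumes "finite I"
  shows "(\<integral>\<^sup>+\<omega>. ennreal (exp (\<Sum>i\<in>I. Z (s i) \<omega>)) \<partial>M) = ennreal (exp ((\<Sum>i\<in>I. \<Sum>j\<in>I. \<gamma> (s i - s j)) / 2))"
proof -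
  \<comment> \<open>\<open>Z (s i) = B (\<tau> (i, True)) - B (\<tau> (i, False))\<close>\<close>
  define b :: "'i \<times> bool \<Rightarrow> real" where "b p = (if snd p then 1 else -1)" for p
  define \<tau> :: "'i \<times> bool \<Rightarrow> real" where "\<tau> p = (if snd p then c * s (fst p) else c * s (fst p) - 1)" for p
  have split_bool: "(\<Sum>p\<in>I \<times> UNIV. f p) = (\<Sum>i\<in>I. f (i, True) + f (i, False))" for f :: "'i \<times> bool \<Rightarrow> real"
  proof -
    have "(\<Sum>p\<in>I \<times> UNIV. f p) = (\<Sum>i\<in>I. \<Sum>x\<in>UNIV. f (i, x))"
      by (simp add: sum.cartesian_product)
    then show ?thesis by (simp add: UNIV_bool add.commute)
  qed
  have "(\<Sum>i\<in>I. Z (s i) \<omega>) = (\<Sum>p\<in>I \<times> UNIV. b p * B (\<tau> p) \<omega>)" for \<omega>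
    unfolding split_bool by (simp add: b_def \<tau>_def Z_def)
  moreover have "(\<Sum>p\<in>I \<times> UNIV. \<Sum>q\<in>I \<times> UNIV. b p * b q * kernel (\<tau> p) (\<tau> q)) = (\<Sum>i\<in>I. \<Sum>j\<in>I. \<gamma> (s i - s j))"
    unfolding split_bool kernel_increments[symmetric]
    by (simp add: b_def \<tau>_def sum.distrib sum_subtractf algebra_simps)
  ultimately show ?thesis
    using nn_integral_exp_gaussian_indexed_sum[OF gaussian, of "I \<times> UNIV" b \<tau>] assms by simp
qed

definition window :: "real \<Rightarrow> real set" where "window x = {x - 1<..<x}"

lemma window_sets[measurable]: "window x \<in> sets borel"
  unfolding window_def by simp

lemma emeasure_window: "emeasure lborel (window x) = 1"
  unfolding window_def by simp

text \<open>Extended-nonnegative versions of \<open>A\<^sub>L\<close> (for \<open>x = L\<close>) and of its integrand: with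
  \<open>\<integral>\<^sup>+\<close> every interchange of integrals is an instance of Tonelli's theorem.\<close>

definition dA :: "real \<Rightarrow> real \<Rightarrow> 'a \<Rightarrow> ennreal" where
  "dA x s \<omega> = ennreal (indicator (window x) s * exp (Z s \<omega>))"

definition nnA :: "real \<Rightarrow> 'a \<Rightarrow> ennreal" where
  "nnA x \<omega> = (\<integral>\<^sup>+s. dA x s \<omega> \<partial>lborel)"

lemma measurable_dA[measurable]:
  assumes [measurable]: "f \<in> borel_measurable N" "h \<in> measurable N M"
  shows "(\<lambda>z. dA x (f z) (h z)) \<in> borel_measurable N"
  unfolding dA_def by measurable

lemma measurable_nnA[measurable]: "nnA x \<in> borel_measurable M"
  unfolding nnA_def by measurable

lemma nn_integral_nnA_mult:
  assumes "W \<in> borel_measurable M"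
  shows "(\<integral>\<^sup>+\<omega>. nnA x \<omega> * W \<omega> \<partial>M) = (\<integral>\<^sup>+s. \<integral>\<^sup>+\<omega>. dA x s \<omega> * W \<omega> \<partial>M \<partial>lborel)"
  using nn_integral_mult_nn_integral_swap[of lborel M "dA x" W] assms
  unfolding nnA_def by (simp add: mult.commute prob_space_imp_sigma_finite[OF prob_space_axioms]
      lborel.sigma_finite_measure_axioms)

lemma nn_integral_prod_dA:
  assumes "finite I"
  shows "(\<integral>\<^sup>+\<omega>. (\<Prod>i\<in>I. dA (x i) (s i) \<omega>) \<partial>M)
           = ennreal ((\<Prod>i\<in>I. indicator (window (x i)) (s i)) * exp ((\<Sum>i\<in>I. \<Sum>j\<in>I. \<gamma> (s i - s j)) / 2))"
proof -
  have "(\<Prod>i\<in>I. dA (x i) (s i) \<omega>)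
      = ennreal (\<Prod>i\<in>I. indicator (window (x i)) (s i)) * ennreal (exp (\<Sum>i\<in>I. Z (s i) \<omega>))" for \<omega>
    using assms by (simp add: dA_def prod_ennreal exp_sum prod.distrib ennreal_mult prod_nonneg)
  then have "(\<integral>\<^sup>+\<omega>. (\<Prod>i\<in>I. dA (x i) (s i) \<omega>) \<partial>M)
      = ennreal (\<Prod>i\<in>I. indicator (window (x i)) (s i)) * (\<integral>\<^sup>+\<omega>. ennreal (exp (\<Sum>i\<in>I. Z (s i) \<omega>)) \<partial>M)"
    by (simp add: nn_integral_cmult)
  then show ?thesis using assms by (simp add: nn_integral_exp_sum_Z ennreal_mult prod_nonneg)
qed

lemma nn_integral_mult_prod_nnA:
  assumes "W \<in> borel_measurable M"
  shows "(\<integral>\<^sup>+\<omega>. W \<omega> * (\<Prod>i<n. nnA (x i) \<omega>) \<partial>M)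
           = nested_lborel n (\<lambda>ss. \<integral>\<^sup>+\<omega>. W \<omega> * (\<Prod>i<n. dA (x i) (ss ! i) \<omega>) \<partial>M)"
  using assms
proof (induction n arbitrary: W x)
  case 0
  then show ?case by simp
next
  case (Suc n)
  note [measurable] = Suc.prems
  have "(\<integral>\<^sup>+\<omega>. W \<omega> * (\<Prod>i<Suc n. nnA (x i) \<omega>) \<partial>M)
      = (\<integral>\<^sup>+\<omega>. nnA (x 0) \<omega> * (W \<omega> * (\<Prod>i<n. nnA (x (Suc i)) \<omega>)) \<partial>M)"
    unfolding prod.lessThan_Suc_shift by (simp add: ac_simps)
  also have "\<dots> = (\<integral>\<^sup>+s. \<integral>\<^sup>+\<omega>. (W \<omega> * dA (x 0) s \<omega>) * (\<Prod>i<n. nnA (x (Suc i)) \<omega>) \<partial>M \<partial>lborel)"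
    using nn_integral_nnA_mult[of "\<lambda>\<omega>. W \<omega> * (\<Prod>i<n. nnA (x (Suc i)) \<omega>)" "x 0"]
    by (simp add: ac_simps)
  also have "\<dots> = (\<integral>\<^sup>+s. nested_lborel n (\<lambda>ss.
      \<integral>\<^sup>+\<omega>. (W \<omega> * dA (x 0) s \<omega>) * (\<Prod>i<n. dA (x (Suc i)) (ss ! i) \<omega>) \<partial>M) \<partial>lborel)"
    by (intro nn_integral_cong Suc.IH) measurable
  also have "\<dots> = nested_lborel (Suc n) (\<lambda>ss. \<integral>\<^sup>+\<omega>. W \<omega> * (\<Prod>i<Suc n. dA (x i) (ss ! i) \<omega>) \<partial>M)"
    unfolding prod.lessThan_Suc_shift by (simp add: ac_simps)
  finally show ?case .
qed

lemma nn_integral_prod_nnA: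
  "(\<integral>\<^sup>+\<omega>. (\<Prod>i<n. nnA (x i) \<omega>) \<partial>M)
     = nested_lborel n (\<lambda>ss. ennreal ((\<Prod>i<n. indicator (window (x i)) (ss ! i)) *
                                       exp ((\<Sum>i<n. \<Sum>j<n. \<gamma> (ss ! i - ss ! j)) / 2)))"
  using nn_integral_mult_prod_nnA[where W="\<lambda>_. 1"]
  by (simp add: nn_integral_prod_dA)

lemma nn_integral_window_const:
  assumes "0 \<le> C"
  shows "(\<integral>\<^sup>+s. ennreal (indicator (window x) s * C) \<partial>lborel) = ennreal C"
proof -
  have "(\<integral>\<^sup>+s. ennreal (indicator (window x) s * C) \<partial>lborel) = (\<integral>\<^sup>+s. ennreal C * indicator (window x) s \<partial>lborel)"
    by (intro nn_integral_cong) (auto split: split_indicator)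
  also have "\<dots> = ennreal C"
    by (simp add: nn_integral_cmult_indicator emeasure_window)
  finally show ?thesis .
qed

lemma nn_integral_nnA: "(\<integral>\<^sup>+\<omega>. nnA x \<omega> \<partial>M) = ennreal (exp (1/2))"
proof -
  have "(\<integral>\<^sup>+\<omega>. nnA x \<omega> \<partial>M) = (\<integral>\<^sup>+\<omega>. (\<Prod>i<Suc 0. nnA x \<omega>) \<partial>M)" by simp
  also have "\<dots> = (\<integral>\<^sup>+s. ennreal (indicator (window x) s * exp (1/2)) \<partial>lborel)"
    unfolding nn_integral_prod_nnA by (simp add: \<gamma>_0)
  also have "\<dots> = ennreal (exp (1/2))"
    by (simp add: nn_integral_window_const)
  finally show ?thesis .
qed

lemma nn_integral_nnA_nnA:
  "(\<integral>\<^sup>+\<omega>. nnA x \<omega> * nnA y \<omega> \<partial>M) =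
     (\<integral>\<^sup>+s. \<integral>\<^sup>+t. ennreal (indicator (window x) s * indicator (window y) t * exp (1 + \<gamma> (s - t)))
        \<partial>lborel \<partial>lborel)" (is "_ = ?rhs")
proof -
  have "(\<integral>\<^sup>+\<omega>. nnA x \<omega> * nnA y \<omega> \<partial>M) = (\<integral>\<^sup>+\<omega>. (\<Prod>i<2. nnA ([x, y] ! i) \<omega>) \<partial>M)"
    by (simp add: numeral_eq_Suc lessThan_Suc ac_simps)
  also have "\<dots> = ?rhs"
    unfolding nn_integral_prod_nnA
    by (simp add: numeral_eq_Suc lessThan_Suc, intro nn_integral_cong)
       (simp add: \<gamma>_0 \<gamma>_commute field_simps)
  finally show ?thesis .
qed

lemma nn_integral_nnA_nnA_nnA:
  "(\<integral>\<^sup>+\<omega>. nnA x \<omega> * nnA y \<omega> * nnA y \<omega> \<partial>M) =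
     (\<integral>\<^sup>+s. \<integral>\<^sup>+t. \<integral>\<^sup>+u. ennreal (indicator (window x) s * indicator (window y) t * indicator (window y) u *
        exp (3/2 + \<gamma> (s - t) + \<gamma> (s - u) + \<gamma> (t - u))) \<partial>lborel \<partial>lborel \<partial>lborel)" (is "_ = ?rhs")
proof -
  have "(\<integral>\<^sup>+\<omega>. nnA x \<omega> * nnA y \<omega> * nnA y \<omega> \<partial>M) = (\<integral>\<^sup>+\<omega>. (\<Prod>i<3. nnA ([x, y, y] ! i) \<omega>) \<partial>M)"
    by (simp add: numeral_eq_Suc lessThan_Suc ac_simps)
  also have "\<dots> = ?rhs"
    unfolding nn_integral_prod_nnA
    by (simp add: numeral_eq_Suc lessThan_Suc, intro nn_integral_cong)
       (simp add: \<gamma>_0 \<gamma>_commute field_simps)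
  finally show ?thesis .
qed

lemma nn_integral_nnA_nnA_nnA_nnA:
  "(\<integral>\<^sup>+\<omega>. nnA x \<omega> * nnA x \<omega> * nnA y \<omega> * nnA y \<omega> \<partial>M) =
     (\<integral>\<^sup>+s. \<integral>\<^sup>+t. \<integral>\<^sup>+u. \<integral>\<^sup>+v. ennreal (indicator (window x) s * indicator (window x) t *
        indicator (window y) u * indicator (window y) v *
        exp (2 + \<gamma> (s - t) + \<gamma> (s - u) + \<gamma> (s - v) + \<gamma> (t - u) + \<gamma> (t - v) + \<gamma> (u - v)))
        \<partial>lborel \<partial>lborel \<partial>lborel \<partial>lborel)" (is "_ = ?rhs")
proof -
  have "(\<integral>\<^sup>+\<omega>. nnA x \<omega> * nnA x \<omega> * nnA y \<omega> * nnA y \<omega> \<partial>M) = (\<integral>\<^sup>+\<omega>. (\<Prod>i<4. nnA ([x, x, y, y] ! i) \<omega>) \<partial>M)"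
    by (simp add: numeral_eq_Suc lessThan_Suc ac_simps)
  also have "\<dots> = ?rhs"
    unfolding nn_integral_prod_nnA
    by (simp add: numeral_eq_Suc lessThan_Suc, intro nn_integral_cong)
       (simp add: \<gamma>_0 \<gamma>_commute field_simps)
  finally show ?thesis .
qed

definition window_integral :: "real \<Rightarrow> ennreal" where
  "window_integral x = (\<integral>\<^sup>+t. \<integral>\<^sup>+u.
     ennreal (indicator (window x) t * indicator (window x) u * exp (\<gamma> (t - u))) \<partial>lborel \<partial>lborel)"

lemma window_integral_cmult:
  assumes "0 \<le> a"
  shows "(\<integral>\<^sup>+t. \<integral>\<^sup>+u. ennreal (a * (indicator (window x) t * indicator (window x) u * exp (\<gamma> (t - u))))
            \<partial>lborel \<partial>lborel)
           = ennreal a * window_integral x"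
proof -
  have "(\<integral>\<^sup>+u. ennreal (a * (indicator (window x) t * indicator (window x) u * exp (\<gamma> (t - u)))) \<partial>lborel)
      = ennreal a * (\<integral>\<^sup>+u. ennreal (indicator (window x) t * indicator (window x) u * exp (\<gamma> (t - u))) \<partial>lborel)" for t
    using assms by (subst nn_integral_cmult[symmetric]) (measurable, simp add: ennreal_mult')
  then show ?thesis
    unfolding window_integral_def by (simp add: nn_integral_cmult)
qed

lemma nn_integral_window_window_const:
  assumes "0 \<le> C"
  shows "(\<integral>\<^sup>+s. \<integral>\<^sup>+t. ennreal (indicator (window x) s * indicator (window y) t * C) \<partial>lborel \<partial>lborel) = ennreal C"
proof -
  have "(\<integral>\<^sup>+t. ennreal (indicator (window x) s * indicator (window y) t * C) \<partial>lborel)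
      = ennreal (indicator (window x) s * C)" for s
    using nn_integral_window_const[of "indicator (window x) s * C" y] assms by (simp add: mult_ac)
  then show ?thesis using assms by (simp add: nn_integral_window_const)
qed

lemma window_integral_shift: "window_integral x = window_integral 0"
proof -
  define h where "h t u = ennreal (indicator (window x) t * indicator (window x) u * exp (\<gamma> (t - u)))" for t u
  have inner: "(\<integral>\<^sup>+u. h t u \<partial>lborel) = (\<integral>\<^sup>+u. h t (x + u) \<partial>lborel)" for t
  proof -
    have "h t \<in> borel_measurable borel" unfolding h_def by measurable
    from nn_integral_real_affine[OF this, of 1 x] show ?thesis by simp
  qed
  have outer: "(\<integral>\<^sup>+t. (\<integral>\<^sup>+u. h t (x + u) \<partial>lborel) \<partial>lborel) = (\<integral>\<^sup>+t. (\<integral>\<^sup>+u. h (x + t) (x + u) \<partial>lborel) \<partial>lborel)"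
  proof -
    have "(\<lambda>t. \<integral>\<^sup>+u. h t (x + u) \<partial>lborel) \<in> borel_measurable borel" unfolding h_def by measurable
    from nn_integral_real_affine[OF this, of 1 x] show ?thesis by simp
  qed
  have "window_integral x = (\<integral>\<^sup>+t. (\<integral>\<^sup>+u. h t u \<partial>lborel) \<partial>lborel)" unfolding window_integral_def h_def ..
  also have "\<dots> = (\<integral>\<^sup>+t. (\<integral>\<^sup>+u. h (x + t) (x + u) \<partial>lborel) \<partial>lborel)" unfolding inner outer ..
  also have "\<dots> = window_integral 0" unfolding window_integral_def h_def
    by (intro nn_integral_cong arg_cong[where f=ennreal]) (simp add: window_def indicator_def)
  finally show ?thesis .
qed

definition \<kappa> :: real where "\<kappa> = (LBINT s=-1..0. (LBINT u=-1..0. exp (\<gamma> (s - u))))"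

lemma interval_integral_window_0:
  fixes f :: "real \<Rightarrow> real"
  shows "(LBINT u=-1..0. f u) = (LINT u|lborel. indicator (window 0) u * f u)"
proof -
  have "-(1::ereal) = ereal (-1)" by (simp add: one_ereal_def)
  then have "einterval (-1) 0 = window 0" by (auto simp: einterval_def window_def)
  then show ?thesis by (simp add: interval_lebesgue_integral_def set_lebesgue_integral_def)
qed

lemma abs_\<gamma>_window_0:
  assumes "s \<in> window 0" "u \<in> window 0"
  shows "\<bar>\<gamma> (s - u)\<bar> \<le> (c + 1) powr (1 + 2*d)"
proof -
  have "\<bar>s - u\<bar> \<le> 1" using assms by (auto simp: window_def)
  then show ?thesis unfolding \<gamma>_def using abs_gammaZ_le[of "1/2 + d" c "s - u"] d_pos c_pos
    by (simp add: algebra_simps)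
qed

lemma window_integral_0_bounds:
  "ennreal (exp (- ((c + 1) powr (1 + 2*d)))) \<le> window_integral 0 \<and>
   window_integral 0 \<le> ennreal (exp ((c + 1) powr (1 + 2*d)))"
proof -
  define P where "P = (c + 1) powr (1 + 2*d)"
  have b: "- P \<le> \<gamma> (s - t) \<and> \<gamma> (s - t) \<le> P" if "s \<in> window 0" "t \<in> window 0" for s t
    using abs_\<gamma>_window_0[OF that] by (auto simp: P_def)
  have "(\<integral>\<^sup>+s. \<integral>\<^sup>+t. ennreal (indicator (window 0) s * indicator (window 0) t * exp (- P)) \<partial>lborel \<partial>lborel)
      \<le> window_integral 0"
    unfolding window_integral_def
    by (intro nn_integral_mono ennreal_leI) (auto simp: indicator_def b)
  moreover have "window_integral 0
      \<le> (\<integral>\<^sup>+s. \<integral>\<^sup>+t. ennreal (indicator (window 0) s * indicator (window 0) t * exp P) \<partial>lborel \<partial>lborel)"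
    unfolding window_integral_def
    by (intro nn_integral_mono ennreal_leI) (auto simp: indicator_def b)
  ultimately show ?thesis by (simp add: nn_integral_window_window_const P_def)
qed

lemma \<kappa>_eq: "\<kappa> = enn2real (window_integral 0)"
proof -
  define G where "G s = (\<integral>\<^sup>+u. ennreal (indicator (window 0) u * exp (\<gamma> (s - u))) \<partial>lborel)" for s
  have [measurable]: "G \<in> borel_measurable borel" unfolding G_def by measurable
  have inner: "(LBINT u=-1..0. exp (\<gamma> (s - u))) = enn2real (G s)" for s
    unfolding interval_integral_window_0 G_def by (rule integral_eq_nn_integral) auto
  have G_finite: "G s < \<top>" if "s \<in> window 0" for s
  proof -
    have "G s \<le> (\<integral>\<^sup>+u. ennreal (indicator (window 0) u * exp ((c + 1) powr (1 + 2*d))) \<partial>lborel)"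
      unfolding G_def using abs_\<gamma>_window_0[OF that]
      by (intro nn_integral_mono ennreal_leI) (auto simp: indicator_def abs_le_iff)
    also have "\<dots> < \<top>" by (simp add: nn_integral_window_const)
    finally show ?thesis .
  qed
  have "\<kappa> = (LINT s|lborel. indicator (window 0) s * enn2real (G s))"
    unfolding \<kappa>_def inner interval_integral_window_0 ..
  also have "\<dots> = enn2real (\<integral>\<^sup>+s. ennreal (indicator (window 0) s * enn2real (G s)) \<partial>lborel)"
    by (rule integral_eq_nn_integral) auto
  also have "(\<integral>\<^sup>+s. ennreal (indicator (window 0) s * enn2real (G s)) \<partial>lborel) = window_integral 0"
    unfolding window_integral_def
  proof (intro nn_integral_cong)
    fix s :: real
    show "ennreal (indicator (window 0) s * enn2real (G s))
      = (\<integral>\<^sup>+u. ennreal (indicator (window 0) s * indicator (window 0) u * exp (\<gamma> (s - u))) \<partial>lborel)"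
      using G_finite[of s] by (cases "s \<in> window 0") (simp_all add: G_def)
  qed
  finally show ?thesis .
qed

lemma window_integral_eq_\<kappa>: "window_integral x = ennreal \<kappa>"
  and \<kappa>_pos: "0 < \<kappa>"
proof -
  define P where "P = (c + 1) powr (1 + 2*d)"
  have fin: "window_integral 0 < \<top>"
    using order_le_less_trans[OF conjunct2[OF window_integral_0_bounds] ennreal_less_top] .
  then show "window_integral x = ennreal \<kappa>"
    by (simp add: window_integral_shift[of x] \<kappa>_eq)
  have "exp (- P) \<le> \<kappa>"
    using enn2real_mono[OF conjunct1[OF window_integral_0_bounds] fin] by (simp add: \<kappa>_eq P_def)
  then show "0 < \<kappa>" using exp_gt_zero[of "- P"] by linarith
qed

lemma nn_integral_nnA_sq: "(\<integral>\<^sup>+\<omega>. nnA x \<omega> * nnA x \<omega> \<partial>M) = ennreal (exp 1 * \<kappa>)"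
proof -
  have "(\<integral>\<^sup>+\<omega>. nnA x \<omega> * nnA x \<omega> \<partial>M)
      = (\<integral>\<^sup>+s. \<integral>\<^sup>+t. ennreal (exp 1 * (indicator (window x) s * indicator (window x) t * exp (\<gamma> (s - t))))
          \<partial>lborel \<partial>lborel)"
    unfolding nn_integral_nnA_nnA by (intro nn_integral_cong) (simp add: exp_add mult_ac)
  also have "\<dots> = ennreal (exp 1) * window_integral x"
    by (simp add: window_integral_cmult)
  finally show ?thesis
    using \<kappa>_pos by (simp add: window_integral_eq_\<kappa> ennreal_mult)
qed

lemma nn_integral_nnA_nnA_bounds:
  assumes b: "\<And>s t. s \<in> window x \<Longrightarrow> t \<in> window y \<Longrightarrow> lo \<le> \<gamma> (s - t) \<and> \<gamma> (s - t) \<le> hi"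
  shows "ennreal (exp (1 + lo)) \<le> (\<integral>\<^sup>+\<omega>. nnA x \<omega> * nnA y \<omega> \<partial>M) \<and>
         (\<integral>\<^sup>+\<omega>. nnA x \<omega> * nnA y \<omega> \<partial>M) \<le> ennreal (exp (1 + hi))"
proof -
  define F where "F v s t = indicator (window x) s * indicator (window y) t * exp (1 + v)" for v s t :: real
  have "F lo s t \<le> F (\<gamma> (s - t)) s t \<and> F (\<gamma> (s - t)) s t \<le> F hi s t" for s t
    using b[of s t] by (auto simp: F_def indicator_def)
  then have "(\<integral>\<^sup>+s. \<integral>\<^sup>+t. ennreal (F lo s t) \<partial>lborel \<partial>lborel)
        \<le> (\<integral>\<^sup>+s. \<integral>\<^sup>+t. ennreal (F (\<gamma> (s - t)) s t) \<partial>lborel \<partial>lborel) \<and>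
      (\<integral>\<^sup>+s. \<integral>\<^sup>+t. ennreal (F (\<gamma> (s - t)) s t) \<partial>lborel \<partial>lborel) \<le> (\<integral>\<^sup>+s. \<integral>\<^sup>+t. ennreal (F hi s t) \<partial>lborel \<partial>lborel)"
    by (intro conjI nn_integral_mono ennreal_leI) blast+
  then show ?thesis
    unfolding nn_integral_nnA_nnA by (simp add: F_def nn_integral_window_window_const)
qed

lemma nn_integral_window_cmult_window_integral:
  assumes "0 \<le> w"
  shows "(\<integral>\<^sup>+s. \<integral>\<^sup>+t. \<integral>\<^sup>+u. ennreal ((indicator (window x) s * w) *
            (indicator (window y) t * indicator (window y) u * exp (\<gamma> (t - u)))) \<partial>lborel \<partial>lborel \<partial>lborel)
           = ennreal (w * \<kappa>)"
proof -
  have "(\<integral>\<^sup>+s. \<integral>\<^sup>+t. \<integral>\<^sup>+u. ennreal ((indicator (window x) s * w) *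
            (indicator (window y) t * indicator (window y) u * exp (\<gamma> (t - u)))) \<partial>lborel \<partial>lborel \<partial>lborel)
      = (\<integral>\<^sup>+s. ennreal (indicator (window x) s * w * \<kappa>) \<partial>lborel)"
    using assms \<kappa>_pos
    by (intro nn_integral_cong, subst window_integral_cmult) (simp_all add: window_integral_eq_\<kappa> flip: ennreal_mult'')
  also have "\<dots> = ennreal (w * \<kappa>)"
    using assms \<kappa>_pos by (simp add: nn_integral_window_const mult.assoc)
  finally show ?thesis .
qed

lemma nn_integral_nnA_nnA_sq_bounds:
  assumes b: "\<And>s t. s \<in> window x \<Longrightarrow> t \<in> window y \<Longrightarrow> lo \<le> \<gamma> (s - t) \<and> \<gamma> (s - t) \<le> hi"
  shows "ennreal (exp (3/2 + 2*lo) * \<kappa>) \<le> (\<integral>\<^sup>+\<omega>. nnA x \<omega> * (nnA y \<omega> * nnA y \<omega>) \<partial>M) \<and>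
         (\<integral>\<^sup>+\<omega>. nnA x \<omega> * (nnA y \<omega> * nnA y \<omega>) \<partial>M) \<le> ennreal (exp (3/2 + 2*hi) * \<kappa>)"
proof -
  define F where "F s t u = indicator (window x) s * indicator (window y) t * indicator (window y) u *
      exp (3/2 + \<gamma> (s - t) + \<gamma> (s - u) + \<gamma> (t - u))" for s t u
  define G where "G w s t u = (indicator (window x) s * w) *
      (indicator (window y) t * indicator (window y) u * exp (\<gamma> (t - u)))" for w s t u
  have "G (exp (3/2 + 2*lo)) s t u \<le> F s t u \<and> F s t u \<le> G (exp (3/2 + 2*hi)) s t u" for s t u
  proof (cases "s \<in> window x \<and> t \<in> window y \<and> u \<in> window y")
    case True
    then have "lo \<le> \<gamma> (s - t)" "lo \<le> \<gamma> (s - u)" "\<gamma> (s - t) \<le> hi" "\<gamma> (s - u) \<le> hi" using b by auto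
    then show ?thesis using True by (simp add: F_def G_def mult_exp_exp)
  qed (auto simp: F_def G_def indicator_def)
  then have "(\<integral>\<^sup>+s. \<integral>\<^sup>+t. \<integral>\<^sup>+u. ennreal (G (exp (3/2 + 2*lo)) s t u) \<partial>lborel \<partial>lborel \<partial>lborel)
        \<le> (\<integral>\<^sup>+s. \<integral>\<^sup>+t. \<integral>\<^sup>+u. ennreal (F s t u) \<partial>lborel \<partial>lborel \<partial>lborel) \<and>
      (\<integral>\<^sup>+s. \<integral>\<^sup>+t. \<integral>\<^sup>+u. ennreal (F s t u) \<partial>lborel \<partial>lborel \<partial>lborel)
        \<le> (\<integral>\<^sup>+s. \<integral>\<^sup>+t. \<integral>\<^sup>+u. ennreal (G (exp (3/2 + 2*hi)) s t u) \<partial>lborel \<partial>lborel \<partial>lborel)"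
    by (intro conjI nn_integral_mono ennreal_leI) blast+
  moreover have "(\<integral>\<^sup>+\<omega>. nnA x \<omega> * (nnA y \<omega> * nnA y \<omega>) \<partial>M)
      = (\<integral>\<^sup>+s. \<integral>\<^sup>+t. \<integral>\<^sup>+u. ennreal (F s t u) \<partial>lborel \<partial>lborel \<partial>lborel)"
    using nn_integral_nnA_nnA_nnA[of x y] by (simp add: F_def mult.assoc)
  ultimately show ?thesis
    unfolding G_def by (simp add: nn_integral_window_cmult_window_integral)
qed

lemma nn_integral_window_integral_cmult_window_integral:
  assumes "0 \<le> w"
  shows "(\<integral>\<^sup>+s. \<integral>\<^sup>+t. \<integral>\<^sup>+u. \<integral>\<^sup>+v. ennreal ((w * (indicator (window x) s * indicator (window x) t * exp (\<gamma> (s - t)))) *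
            (indicator (window y) u * indicator (window y) v * exp (\<gamma> (u - v)))) \<partial>lborel \<partial>lborel \<partial>lborel \<partial>lborel)
           = ennreal (w * \<kappa> * \<kappa>)"
proof -
  have "(\<integral>\<^sup>+s. \<integral>\<^sup>+t. \<integral>\<^sup>+u. \<integral>\<^sup>+v. ennreal ((w * (indicator (window x) s * indicator (window x) t * exp (\<gamma> (s - t)))) *
            (indicator (window y) u * indicator (window y) v * exp (\<gamma> (u - v)))) \<partial>lborel \<partial>lborel \<partial>lborel \<partial>lborel)
      = (\<integral>\<^sup>+s. \<integral>\<^sup>+t. ennreal ((w * \<kappa>) * (indicator (window x) s * indicator (window x) t * exp (\<gamma> (s - t))))
          \<partial>lborel \<partial>lborel)"
    using assms \<kappa>_pos
    by (intro nn_integral_cong, subst window_integral_cmult)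
      (simp_all add: window_integral_eq_\<kappa> mult_ac flip: ennreal_mult'')
  also have "\<dots> = ennreal (w * \<kappa> * \<kappa>)"
    using assms \<kappa>_pos by (subst window_integral_cmult) (simp_all add: window_integral_eq_\<kappa> flip: ennreal_mult'')
  finally show ?thesis .
qed

lemma nn_integral_nnA_sq_nnA_sq_bounds:
  assumes b: "\<And>s t. s \<in> window x \<Longrightarrow> t \<in> window y \<Longrightarrow> lo \<le> \<gamma> (s - t) \<and> \<gamma> (s - t) \<le> hi"
  shows "ennreal (exp (2 + 4*lo) * \<kappa> * \<kappa>) \<le> (\<integral>\<^sup>+\<omega>. nnA x \<omega> * nnA x \<omega> * (nnA y \<omega> * nnA y \<omega>) \<partial>M) \<and>
         (\<integral>\<^sup>+\<omega>. nnA x \<omega> * nnA x \<omega> * (nnA y \<omega> * nnA y \<omega>) \<partial>M) \<le> ennreal (exp (2 + 4*hi) * \<kappa> * \<kappa>)"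
proof -
  define F where "F s t u v = indicator (window x) s * indicator (window x) t *
      indicator (window y) u * indicator (window y) v *
      exp (2 + \<gamma> (s - t) + \<gamma> (s - u) + \<gamma> (s - v) + \<gamma> (t - u) + \<gamma> (t - v) + \<gamma> (u - v))" for s t u v
  define G where "G w s t u v = (w * (indicator (window x) s * indicator (window x) t * exp (\<gamma> (s - t)))) *
      (indicator (window y) u * indicator (window y) v * exp (\<gamma> (u - v)))" for w s t u v
  have "G (exp (2 + 4*lo)) s t u v \<le> F s t u v \<and> F s t u v \<le> G (exp (2 + 4*hi)) s t u v" for s t u v
  proof (cases "s \<in> window x \<and> t \<in> window x \<and> u \<in> window y \<and> v \<in> window y")
    case True
    then have "lo \<le> \<gamma> (s - u)" "lo \<le> \<gamma> (s - v)" "lo \<le> \<gamma> (t - u)" "lo \<le> \<gamma> (t - v)"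
      "\<gamma> (s - u) \<le> hi" "\<gamma> (s - v) \<le> hi" "\<gamma> (t - u) \<le> hi" "\<gamma> (t - v) \<le> hi"
      using b by auto
    then show ?thesis using True by (simp add: F_def G_def mult_exp_exp)
  qed (auto simp: F_def G_def indicator_def)
  then have "(\<integral>\<^sup>+s. \<integral>\<^sup>+t. \<integral>\<^sup>+u. \<integral>\<^sup>+v. ennreal (G (exp (2 + 4*lo)) s t u v) \<partial>lborel \<partial>lborel \<partial>lborel \<partial>lborel)
        \<le> (\<integral>\<^sup>+s. \<integral>\<^sup>+t. \<integral>\<^sup>+u. \<integral>\<^sup>+v. ennreal (F s t u v) \<partial>lborel \<partial>lborel \<partial>lborel \<partial>lborel) \<and>
      (\<integral>\<^sup>+s. \<integral>\<^sup>+t. \<integral>\<^sup>+u. \<integral>\<^sup>+v. ennreal (F s t u v) \<partial>lborel \<partial>lborel \<partial>lborel \<partial>lborel)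
        \<le> (\<integral>\<^sup>+s. \<integral>\<^sup>+t. \<integral>\<^sup>+u. \<integral>\<^sup>+v. ennreal (G (exp (2 + 4*hi)) s t u v) \<partial>lborel \<partial>lborel \<partial>lborel \<partial>lborel)"
    by (intro conjI nn_integral_mono ennreal_leI) blast+
  moreover have "(\<integral>\<^sup>+\<omega>. nnA x \<omega> * nnA x \<omega> * (nnA y \<omega> * nnA y \<omega>) \<partial>M)
      = (\<integral>\<^sup>+s. \<integral>\<^sup>+t. \<integral>\<^sup>+u. \<integral>\<^sup>+v. ennreal (F s t u v) \<partial>lborel \<partial>lborel \<partial>lborel \<partial>lborel)"
    using nn_integral_nnA_nnA_nnA_nnA[of x y] by (simp add: F_def mult.assoc)
  ultimately show ?thesis
    unfolding G_def by (simp add: nn_integral_window_integral_cmult_window_integral)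
qed

text \<open>For \<open>s\<close> in window \<open>n\<close> and \<open>t\<close> in window \<open>0\<close>, \<open>c (s - t) \<plusminus> 1\<close> lies between
  \<open>c n - (c + 1)\<close> and \<open>c n + (c + 1)\<close>; by \<open>gammaZ_bounds\<close> this gives:\<close>

definition lower :: "nat \<Rightarrow> real" where
  "lower n = d * (1 + 2*d) * (c * real n + (c + 1)) powr (2*d - 1)"

definition upper :: "nat \<Rightarrow> real" where
  "upper n = d * (1 + 2*d) * (c * real n - (c + 1)) powr (2*d - 1)"

lemma lower_upper_ratio: "(\<lambda>n. lower n / upper n) \<longlonglongrightarrow> 1"
proof -
  have "(\<lambda>n. (c * real n + (c + 1)) powr (2*d - 1) / (c * real n - (c + 1)) powr (2*d - 1)) \<longlonglongrightarrow> 1"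
    using c_pos by real_asymp
  moreover have "d * (1 + 2*d) \<noteq> 0" using d_pos by simp
  ultimately show ?thesis unfolding lower_def upper_def by simp
qed

lemma upper_tendsto_0: "upper \<longlonglongrightarrow> 0"
  unfolding upper_def using d_pos d_less c_pos by real_asymp

lemma \<gamma>_between_lower_upper:
  assumes n: "c * (real n - 1) > 1" and r: "real n - 1 < r" "r < real n + 1"
  shows "lower n \<le> \<gamma> r \<and> \<gamma> r \<le> upper n"
proof -
  have r_lower: "c * (real n - 1) < c * r" and r_upper: "c * r < c * (real n + 1)"
    using r c_pos by simp_all
  then have cr: "c * r > 1" using n by linarith
  have H: "(1/2 + d) * (2*(1/2 + d) - 1) = d * (1 + 2*d)" "2*(1/2 + d) - 2 = 2*d - 1"
    by (simp_all add: algebra_simps)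
  have \<gamma>_bounds: "d * (1 + 2*d) * (c*r + 1) powr (2*d - 1) \<le> \<gamma> r \<and> \<gamma> r \<le> d * (1 + 2*d) * (c*r - 1) powr (2*d - 1)"
    using gammaZ_bounds[of "1/2 + d" c r, unfolded H] d_pos d_less cr unfolding \<gamma>_def by simp
  have K: "0 \<le> d * (1 + 2*d)" and q: "2*d - 1 \<le> 0" using d_pos d_less by simp_all
  have "(c * real n + (c + 1)) powr (2*d - 1) \<le> (c*r + 1) powr (2*d - 1)"
    using r_upper cr q by (intro powr_mono2') (simp_all add: algebra_simps)
  moreover have "(c*r - 1) powr (2*d - 1) \<le> (c * real n - (c + 1)) powr (2*d - 1)"
    using r_lower n q by (intro powr_mono2') (simp_all add: algebra_simps)
  ultimately show ?thesis
    using \<gamma>_bounds mult_left_mono[OF _ K] unfolding lower_def upper_def by (meson order_trans)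
qed

lemma eventually_lower_upper:
  "eventually (\<lambda>n. 0 < lower n \<and> lower n \<le> \<gamma> (real n) \<and> \<gamma> (real n) \<le> upper n \<and>
     (\<forall>s t. s \<in> window (real n) \<longrightarrow> t \<in> window 0 \<longrightarrow>
        lower n \<le> \<gamma> (s - t) \<and> \<gamma> (s - t) \<le> upper n)) sequentially"
proof -
  have "eventually (\<lambda>n. c * (real n - 1) > 1) sequentially"
    using c_pos by real_asymp
  then show ?thesis
  proof eventually_elim
    case (elim n)
    have "0 \<le> c * real n" using c_pos by simp
    then have "0 < c * real n + (c + 1)" using c_pos by linarith
    then have "0 < lower n" unfolding lower_def using d_pos by simp
    moreover have "lower n \<le> \<gamma> (real n) \<and> \<gamma> (real n) \<le> upper n"
      using elim by (intro \<gamma>_between_lower_upper) auto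
    moreover have "lower n \<le> \<gamma> (s - t) \<and> \<gamma> (s - t) \<le> upper n"
      if "s \<in> window (real n)" "t \<in> window 0" for s t
      using elim that by (intro \<gamma>_between_lower_upper) (auto simp: window_def)
    ultimately show ?case by blast
  qed
qed

definition A :: "nat \<Rightarrow> 'a \<Rightarrow> real" where
  "A L \<omega> = (LBINT s=real L - 1..real L. exp (Z s \<omega>))"

definition BB :: "nat \<Rightarrow> 'a \<Rightarrow> real" where
  "BB L \<omega> = (LBINT s=real L - 1..real L. (LBINT t=real L - 1..real L. exp (Z s \<omega>) * exp (Z t \<omega>)))"

lemma A_eq_nnA:
  assumes "\<omega> \<in> space M"
  shows "A L \<omega> = enn2real (nnA (real L) \<omega>)"
proof -
  have [measurable]: "(\<lambda>s. \<omega>) \<in> measurable lborel M" using assms by simp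
  have "A L \<omega> = (LINT s|lborel. indicator (window (real L)) s * exp (Z s \<omega>))"
    unfolding A_def window_def by (simp add: interval_lebesgue_integral_def set_lebesgue_integral_def)
  also have "\<dots> = enn2real (nnA (real L) \<omega>)"
    unfolding nnA_def dA_def by (rule integral_eq_nn_integral) auto
  finally show ?thesis .
qed

lemma BB_eq_A_A: "BB L \<omega> = A L \<omega> * A L \<omega>"
  unfolding A_def BB_def by simp

lemma BB_eq_nnA:
  assumes "\<omega> \<in> space M"
  shows "BB L \<omega> = enn2real (nnA (real L) \<omega> * nnA (real L) \<omega>)"
  using assms by (simp add: BB_eq_A_A A_eq_nnA enn2real_mult)

lemma cov_asymp_equiv:
  fixes X Y :: "nat \<Rightarrow> 'a \<Rightarrow> real" and F G :: "nat \<Rightarrow> 'a \<Rightarrow> ennreal"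
  assumes k: "0 < k" and C: "0 < C" and "0 \<le> a" "0 \<le> b" "a * b = C"
    and [measurable]: "\<And>n. F n \<in> borel_measurable M" "\<And>n. G n \<in> borel_measurable M"
    and "\<And>n \<omega>. \<omega> \<in> space M \<Longrightarrow> X n \<omega> = enn2real (F n \<omega>)"
    and "\<And>n \<omega>. \<omega> \<in> space M \<Longrightarrow> Y n \<omega> = enn2real (G n \<omega>)"
    and "\<And>n. (\<integral>\<^sup>+\<omega>. F n \<omega> \<partial>M) = ennreal a" "\<And>n. (\<integral>\<^sup>+\<omega>. G n \<omega> \<partial>M) = ennreal b"
    and moment: "\<And>n lo hi. (\<And>s t. s \<in> window (real n) \<Longrightarrow> t \<in> window 0 \<Longrightarrow> lo \<le> \<gamma> (s - t) \<and> \<gamma> (s - t) \<le> hi) \<Longrightarrow>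
        ennreal (C * exp (k * lo)) \<le> (\<integral>\<^sup>+\<omega>. F n \<omega> * G n \<omega> \<partial>M) \<and>
        (\<integral>\<^sup>+\<omega>. F n \<omega> * G n \<omega> \<partial>M) \<le> ennreal (C * exp (k * hi))"
  shows "(\<lambda>n. cov M (X n) (Y n)) \<sim>[sequentially] (\<lambda>n. k * C * \<gamma> (real n))"
proof -
  have "eventually (\<lambda>n. 0 < lower n \<and> lower n \<le> \<gamma> (real n) \<and> \<gamma> (real n) \<le> upper n \<and>
      C * (exp (k * lower n) - 1) \<le> cov M (X n) (Y n) \<and>
      cov M (X n) (Y n) \<le> C * (exp (k * upper n) - 1)) sequentially"
    using eventually_lower_upper
  proof eventually_elim
    case (elim n)
    then have "ennreal (C * exp (k * lower n)) \<le> (\<integral>\<^sup>+\<omega>. F n \<omega> * G n \<omega> \<partial>M) \<and>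
        (\<integral>\<^sup>+\<omega>. F n \<omega> * G n \<omega> \<partial>M) \<le> ennreal (C * exp (k * upper n))"
      by (intro moment) auto
    then have "C * exp (k * lower n) - a * b \<le> cov M (X n) (Y n) \<and>
        cov M (X n) (Y n) \<le> C * exp (k * upper n) - a * b"
      using assms C by (intro cov_bounds_nn_integral[where F="F n" and G="G n"]) auto
    then show ?case using elim \<open>a * b = C\<close> by (simp add: algebra_simps)
  qed
  from asymp_equiv_exp_sandwich[OF k C lower_upper_ratio upper_tendsto_0 this] show ?thesis .
qed

lemma cov_A_A_asymp: "(\<lambda>L. cov M (A L) (A 0)) \<sim>[sequentially] (\<lambda>L. exp 1 * \<gamma> (real L))"
proof -
  have "(\<lambda>L. cov M (A L) (A 0)) \<sim>[sequentially] (\<lambda>L. 1 * exp 1 * \<gamma> (real L))"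
  proof (rule cov_asymp_equiv[where F="\<lambda>n. nnA (real n)" and G="\<lambda>_. nnA 0"])
    show "exp (1/2) * exp (1/2) = exp (1::real)" by (simp flip: exp_add)
    show "ennreal (exp 1 * exp (1 * lo)) \<le> (\<integral>\<^sup>+\<omega>. nnA (real n) \<omega> * nnA 0 \<omega> \<partial>M) \<and>
        (\<integral>\<^sup>+\<omega>. nnA (real n) \<omega> * nnA 0 \<omega> \<partial>M) \<le> ennreal (exp 1 * exp (1 * hi))"
      if "\<And>s t. s \<in> window (real n) \<Longrightarrow> t \<in> window 0 \<Longrightarrow> lo \<le> \<gamma> (s - t) \<and> \<gamma> (s - t) \<le> hi" for n lo hi
      using nn_integral_nnA_nnA_bounds[OF that] by (simp add: exp_add)
  qed (simp_all add: A_eq_nnA nn_integral_nnA)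
  then show ?thesis by simp
qed

lemma cov_A_BB_asymp: "(\<lambda>L. cov M (A 0) (BB L)) \<sim>[sequentially] (\<lambda>L. 2 * exp (3/2) * \<gamma> (real L) * \<kappa>)"
proof -
  have "(\<lambda>L. cov M (A 0) (BB L)) \<sim>[sequentially] (\<lambda>L. 2 * (exp (3/2) * \<kappa>) * \<gamma> (real L))"
  proof (rule cov_asymp_equiv[where F="\<lambda>_. nnA 0" and G="\<lambda>n \<omega>. nnA (real n) \<omega> * nnA (real n) \<omega>"])
    show "exp (1/2) * (exp 1 * \<kappa>) = exp (3/2) * \<kappa>"
      by (simp add: mult.assoc flip: exp_add)
    show "ennreal (exp (3/2) * \<kappa> * exp (2 * lo)) \<le> (\<integral>\<^sup>+\<omega>. nnA 0 \<omega> * (nnA (real n) \<omega> * nnA (real n) \<omega>) \<partial>M) \<and>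
        (\<integral>\<^sup>+\<omega>. nnA 0 \<omega> * (nnA (real n) \<omega> * nnA (real n) \<omega>) \<partial>M) \<le> ennreal (exp (3/2) * \<kappa> * exp (2 * hi))"
      if cross: "\<And>s t. s \<in> window (real n) \<Longrightarrow> t \<in> window 0 \<Longrightarrow> lo \<le> \<gamma> (s - t) \<and> \<gamma> (s - t) \<le> hi"
      for n lo hi
    proof -
      have "lo \<le> \<gamma> (s - t) \<and> \<gamma> (s - t) \<le> hi" if "s \<in> window 0" "t \<in> window (real n)" for s t
        using cross[OF that(2,1)] \<gamma>_commute[of s t] by simp
      from nn_integral_nnA_nnA_sq_bounds[OF this] show ?thesis by (simp add: exp_add mult_ac)
    qed
  qed (use \<kappa>_pos in \<open>simp_all add: A_eq_nnA BB_eq_nnA nn_integral_nnA nn_integral_nnA_sq\<close>)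
  then show ?thesis by (simp add: ac_simps)
qed

lemma cov_BB_BB_asymp:
  "(\<lambda>L. cov M (BB 0) (BB L)) \<sim>[sequentially] (\<lambda>L. 4 * exp 2 * \<gamma> (real L) * (\<kappa> * \<kappa>))"
proof -
  have "(\<lambda>L. cov M (BB 0) (BB L)) \<sim>[sequentially] (\<lambda>L. 4 * (exp 2 * (\<kappa> * \<kappa>)) * \<gamma> (real L))"
  proof (rule cov_asymp_equiv[where F="\<lambda>_ \<omega>. nnA 0 \<omega> * nnA 0 \<omega>" and G="\<lambda>n \<omega>. nnA (real n) \<omega> * nnA (real n) \<omega>"])
    show "exp 1 * \<kappa> * (exp 1 * \<kappa>) = exp 2 * (\<kappa> * \<kappa>)"
      by (simp add: mult_ac flip: exp_add)
    show "ennreal (exp 2 * (\<kappa> * \<kappa>) * exp (4 * lo))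
          \<le> (\<integral>\<^sup>+\<omega>. nnA 0 \<omega> * nnA 0 \<omega> * (nnA (real n) \<omega> * nnA (real n) \<omega>) \<partial>M) \<and>
        (\<integral>\<^sup>+\<omega>. nnA 0 \<omega> * nnA 0 \<omega> * (nnA (real n) \<omega> * nnA (real n) \<omega>) \<partial>M)
          \<le> ennreal (exp 2 * (\<kappa> * \<kappa>) * exp (4 * hi))"
      if cross: "\<And>s t. s \<in> window (real n) \<Longrightarrow> t \<in> window 0 \<Longrightarrow> lo \<le> \<gamma> (s - t) \<and> \<gamma> (s - t) \<le> hi"
      for n lo hi
    proof -
      have "lo \<le> \<gamma> (s - t) \<and> \<gamma> (s - t) \<le> hi" if "s \<in> window 0" "t \<in> window (real n)" for s t
        using cross[OF that(2,1)] \<gamma>_commute[of s t] by simp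
      from nn_integral_nnA_sq_nnA_sq_bounds[OF this] show ?thesis by (simp add: exp_add mult_ac)
    qed
  qed (use \<kappa>_pos in \<open>simp_all add: BB_eq_nnA nn_integral_nnA_sq\<close>)
  then show ?thesis by (simp add: ac_simps)
qed

end

theorem mainTheorem6:
  fixes M :: "'a measure" and B :: "real \<Rightarrow> 'a \<Rightarrow> real" and d c :: real
  assumes "0 < d" "d < 1/2" "c > 0"
    and "fBm M (1/2 + d) B"
  defines "Z \<equiv> (\<lambda>t \<omega>. B (c*t) \<omega> - B (c*t - 1) \<omega>)"
    and "\<gamma> \<equiv> gammaZ (1/2 + d) c"
  defines "A \<equiv> (\<lambda>(L::nat) \<omega>. LBINT s=real L - 1..real L. exp (Z s \<omega>))"
    and "BB \<equiv> (\<lambda>(L::nat) \<omega>. LBINT s=real L - 1..real L. (LBINT t=real L - 1..real L.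
                  exp (Z s \<omega>) * exp (Z t \<omega>)))"
  shows "(\<lambda>L. cov M (A L) (A 0)) \<sim>[at_top] (\<lambda>L. exp 1 * \<gamma> (real L)) \<and>
         (\<lambda>L. cov M (A 0) (BB L)) \<sim>[at_top]
           (\<lambda>L. 2 * exp (3/2) * \<gamma> (real L) *
                (LBINT s=-1..0. (LBINT u=-1..0. exp (\<gamma> (s - u))))) \<and>
         (\<lambda>L. cov M (BB 0) (BB L)) \<sim>[at_top]
           (\<lambda>L. 4 * exp 2 * \<gamma> (real L) *
                (LBINT s=-1..0. (LBINT t=-1..0. (LBINT u=-1..0. (LBINT v=-1..0.
                    exp (\<gamma> (s - t)) * exp (\<gamma> (u - v)))))))"
proof -
  have loc: "fbm_increments M B d c"
    using assms(1-4) by unfold_locales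
  have Z: "Z = fbm_increments.Z B c" and \<gamma>: "\<gamma> = fbm_increments.\<gamma> d c"
    by (simp_all add: Z_def \<gamma>_def fun_eq_iff fbm_increments.Z_def[OF loc] fbm_increments.\<gamma>_def[OF loc])
  have "A = fbm_increments.A B c" "BB = fbm_increments.BB B c"
    by (simp_all add: A_def BB_def Z fun_eq_iff fbm_increments.A_def[OF loc] fbm_increments.BB_def[OF loc])
  moreover have "(LBINT s=-1..0. (LBINT t=-1..0. (LBINT u=-1..0. (LBINT v=-1..0.
                    exp (\<gamma> (s - t)) * exp (\<gamma> (u - v)))))) = fbm_increments.\<kappa> d c * fbm_increments.\<kappa> d c"
    by (simp add: \<gamma> fbm_increments.\<kappa>_def[OF loc])
  ultimately show ?thesis
    using fbm_increments.cov_A_A_asymp[OF loc] fbm_increments.cov_A_BB_asymp[OF loc]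
      fbm_increments.cov_BB_BB_asymp[OF loc]
    by (simp add: \<gamma> fbm_increments.\<kappa>_def[OF loc])
qed

end
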